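(* For any variety $\mathcal{V}$ of $\Omega$-algebras, the variety $\mathcal{V}^p$ is generated by the quasivariety $\mathcal{V}\circ\mathcal{S}$, i.e. $\mathcal{V}^p$ is the smallest variety containing $\mathcal{V}\circ\mathcal{S}$.
   Context: Standing conventions: $\Omega$-algebras are of a plural similarity type (no nullary operation symbols, at least one operation symbol of arity $\ge2$). $T_n$ is the set of $\Omega$-terms in $x_1,\dots,x_n$ in which all $n$ variables occur. An identity is regular if the same variables occur on both sides. $\mathcal{S}$ is the variety of $\Omega$-algebras satisfying all regular identities. $\mathcal{V}\circ\mathcal{S}$ is the class of $\Omega$-algebras $A$ having a congruence $\theta$ with $A/\theta\in\mathcal{S}$ and every $\theta$-class (a subalgebra) in $\mathcal{V}$. Prolongation: for an identity $\sigma$ of the form $u(y_1,\dots,y_n)=v(y_1,\dots,y_n)$ and $m\ge1$, $\sigma^p_m$ is the set of identities $u(r_1,\dots,r_n)=v(r_1,\dots,r_n)$ obtained by substituting $r_i(x_1,\dots,x_m)$ for $y_i$, with $r_i$ ranging over $T_m$; $\sigma^p=\bigcup_m\sigma^p_m$; $\Sigma^p=\bigcup_{\sigma\in\Sigma}\sigma^p$. $\mathcal{V}^p$ is the variety defined by $\mathrm{Id}(\mathcal{V})^p$, where $\mathrm{Id}(\mathcal{V})$ is the set of all identities holding in $\mathcal{V}$. *)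

theory Defs
  imports Main
begin

datatype ('f, 'v) trm = Var 'v | App 'f "('f, 'v) trm list"

fun wf_trm :: "('f \<Rightarrow> nat) \<Rightarrow> ('f, 'v) trm \<Rightarrow> bool" where
  "wf_trm ar (Var x) = True"
| "wf_trm ar (App f ts) = (length ts = ar f \<and> (\<forall>t \<in> set ts. wf_trm ar t))"

fun vars :: "('f, 'v) trm \<Rightarrow> 'v set" where
  "vars (Var x) = {x}"
| "vars (App f ts) = (\<Union>t \<in> set ts. vars t)"

fun subst :: "('v \<Rightarrow> ('f, 'w) trm) \<Rightarrow> ('f, 'v) trm \<Rightarrow> ('f, 'w) trm" where
  "subst s (Var x) = s x"
| "subst s (App f ts) = App f (map (subst s) ts)"

definition plural :: "('f \<Rightarrow> nat) \<Rightarrow> bool" where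
  "plural ar \<longleftrightarrow> (\<forall>f. 1 \<le> ar f) \<and> (\<exists>f. 2 \<le> ar f)"

definition T :: "('f \<Rightarrow> nat) \<Rightarrow> nat \<Rightarrow> ('f, nat) trm set" where
  "T ar m = {t. wf_trm ar t \<and> vars t = {1..m}}"

type_synonym 'f ident = "('f, nat) trm \<times> ('f, nat) trm"

definition wf_ident :: "('f \<Rightarrow> nat) \<Rightarrow> 'f ident \<Rightarrow> bool" where
  "wf_ident ar e \<longleftrightarrow> wf_trm ar (fst e) \<and> wf_trm ar (snd e)"

definition regular :: "'f ident \<Rightarrow> bool" where
  "regular e \<longleftrightarrow> vars (fst e) = vars (snd e)"

definition is_alg :: "('f \<Rightarrow> nat) \<Rightarrow> 'a set \<Rightarrow> ('f \<Rightarrow> 'a list \<Rightarrow> 'a) \<Rightarrow> bool" where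
  "is_alg ar A F \<longleftrightarrow> A \<noteq> {} \<and>
     (\<forall>f xs. length xs = ar f \<and> set xs \<subseteq> A \<longrightarrow> F f xs \<in> A)"

fun eval :: "('f \<Rightarrow> 'a list \<Rightarrow> 'a) \<Rightarrow> ('v \<Rightarrow> 'a) \<Rightarrow> ('f, 'v) trm \<Rightarrow> 'a" where
  "eval F a (Var x) = a x"
| "eval F a (App f ts) = F f (map (eval F a) ts)"

definition satisfies :: "'a set \<Rightarrow> ('f \<Rightarrow> 'a list \<Rightarrow> 'a) \<Rightarrow> 'f ident \<Rightarrow> bool" where
  "satisfies A F e \<longleftrightarrow> (\<forall>a. (\<forall>i. a i \<in> A) \<longrightarrow> eval F a (fst e) = eval F a (snd e))"

definition Mod :: "('f \<Rightarrow> nat) \<Rightarrow> 'f ident set \<Rightarrow> 'a set \<Rightarrow> ('f \<Rightarrow> 'a list \<Rightarrow> 'a) \<Rightarrow> bool" where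
  "Mod ar \<Sigma> A F \<longleftrightarrow> is_alg ar A F \<and> (\<forall>e \<in> \<Sigma>. satisfies A F e)"

definition in_S :: "('f \<Rightarrow> nat) \<Rightarrow> 'a set \<Rightarrow> ('f \<Rightarrow> 'a list \<Rightarrow> 'a) \<Rightarrow> bool" where
  "in_S ar A F \<longleftrightarrow> Mod ar {e. wf_ident ar e \<and> regular e} A F"

definition congruence :: "('f \<Rightarrow> nat) \<Rightarrow> 'a set \<Rightarrow> ('f \<Rightarrow> 'a list \<Rightarrow> 'a) \<Rightarrow> 'a rel \<Rightarrow> bool" where
  "congruence ar A F \<theta> \<longleftrightarrow> equiv A \<theta> \<and>
     (\<forall>f xs ys. length xs = ar f \<and> length ys = ar f \<and> set xs \<subseteq> A \<and> set ys \<subseteq> A \<and>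
        (\<forall>i < ar f. (xs ! i, ys ! i) \<in> \<theta>) \<longrightarrow> (F f xs, F f ys) \<in> \<theta>)"

definition quot_ops :: "('f \<Rightarrow> 'a list \<Rightarrow> 'a) \<Rightarrow> 'a rel \<Rightarrow> 'f \<Rightarrow> 'a set list \<Rightarrow> 'a set" where
  "quot_ops F \<theta> f Xs = \<theta> `` {F f (map (\<lambda>X. SOME x. x \<in> X) Xs)}"

text \<open>The class V o S, for V = Mod Sigma.\<close>
definition in_VoS :: "('f \<Rightarrow> nat) \<Rightarrow> 'f ident set \<Rightarrow> 'a set \<Rightarrow> ('f \<Rightarrow> 'a list \<Rightarrow> 'a) \<Rightarrow> bool" where
  "in_VoS ar \<Sigma> A F \<longleftrightarrow> is_alg ar A F \<and>
     (\<exists>\<theta>. congruence ar A F \<theta> \<and> in_S ar (A // \<theta>) (quot_ops F \<theta>) \<and>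
          (\<forall>X \<in> A // \<theta>. Mod ar \<Sigma> X F))"

text \<open>Validity is tested on all algebras whose carrier
  lies in the type of terms ('f, nat) trm, which is large enough (cardinality
  max(|Omega|, aleph_0)) to contain an isomorphic copy of every finitely generated
  algebra, hence to detect failure of every identity in V.\<close>
definition Id_of :: "('f \<Rightarrow> nat) \<Rightarrow> 'f ident set \<Rightarrow> 'f ident set" where
  "Id_of ar \<Sigma> = {e. wf_ident ar e \<and>
      (\<forall>(B :: ('f, nat) trm set) G. Mod ar \<Sigma> B G \<longrightarrow> satisfies B G e)}"

definition prolong_m :: "('f \<Rightarrow> nat) \<Rightarrow> nat \<Rightarrow> 'f ident \<Rightarrow> 'f ident set" where
  "prolong_m ar m e = {(subst s (fst e), subst s (snd e)) | s.
      \<forall>y \<in> vars (fst e) \<union> vars (snd e). s y \<in> T ar m}"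

definition prolong :: "('f \<Rightarrow> nat) \<Rightarrow> 'f ident \<Rightarrow> 'f ident set" where
  "prolong ar e = (\<Union>m \<in> {m. 1 \<le> m}. prolong_m ar m e)"

definition prolong_set :: "('f \<Rightarrow> nat) \<Rightarrow> 'f ident set \<Rightarrow> 'f ident set" where
  "prolong_set ar \<Sigma> = (\<Union>e \<in> \<Sigma>. prolong ar e)"

definition in_Vp :: "('f \<Rightarrow> nat) \<Rightarrow> 'f ident set \<Rightarrow> 'a set \<Rightarrow> ('f \<Rightarrow> 'a list \<Rightarrow> 'a) \<Rightarrow> bool" where
  "in_Vp ar \<Sigma> A F \<longleftrightarrow> Mod ar (prolong_set ar (Id_of ar \<Sigma>)) A F"

end

(* Let A be in V o S via theta and take a prolonged identity u(r_1,...,r_n) = v(r_1,...,r_n)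
   with all r_i in T_m.  Any two r_i, r_j form a regular identity, so under every assignment
   their values lie in one theta-class; that class is in V, hence satisfies u = v.

   Conversely, V^p is generated by its free algebra: terms modulo derivability from Id(V)^p.
   Since Id(V)^p is regular, "same set of variables" is a congruence of the free algebra whose
   quotient lies in S.  A class of terms with variable set Y, |Y| = m, lies in V: renaming Y
   to {1..m} turns every assignment into that class into one into T_m, so every instance of an
   identity of V is a renamed instance of its prolongation.  Hence the free algebra is in
   V o S, and every identity of V o S holds in V^p. *)

theory Submission
  imports Defs
begin

lemma eval_subst: "eval F a (subst s t) = eval F (\<lambda>i. eval F a (s i)) t"
  by (induction t) (simp_all cong: map_cong)

lemma subst_cong: "(\<forall>i\<in>vars t. s i = s' i) \<Longrightarrow> subst s t = subst s' t"
  by (induction t) (auto intro!: map_cong)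

lemma subst_subst: "subst s (subst s' t) = subst (\<lambda>x. subst s (s' x)) t"
  by (induction t) auto

lemma subst_Var [simp]: "subst Var t = t"
  by (induction t) (auto intro: map_idI)

lemma vars_subst: "vars (subst s t) = (\<Union>i\<in>vars t. vars (s i))"
  by (induction t) auto

lemma wf_subst: "wf_trm ar t \<Longrightarrow> (\<And>i. wf_trm ar (s i)) \<Longrightarrow> wf_trm ar (subst s t)"
  by (induction t) auto

lemma finite_vars: "finite (vars t)"
  by (induction t) auto

lemma vars_nonempty: "plural ar \<Longrightarrow> wf_trm ar t \<Longrightarrow> vars t \<noteq> {}"
proof (induction t)
  case (App f ts)
  then have "ts \<noteq> []"
    unfolding plural_def by (metis list.size(3) not_one_le_zero wf_trm.simps(2))
  then show ?case using App by (cases ts) auto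
qed simp

lemma eval_closed: "is_alg ar A F \<Longrightarrow> \<forall>i. a i \<in> A \<Longrightarrow> wf_trm ar t \<Longrightarrow> eval F a t \<in> A"
proof (induction t)
  case (App f ts)
  then have "set (map (eval F a) ts) \<subseteq> A" by auto
  with App.prems show ?case unfolding is_alg_def by auto
qed simp

lemma congruenceD:
  "congruence ar A F \<theta> \<Longrightarrow> length xs = ar f \<Longrightarrow> length ys = ar f \<Longrightarrow>
    set xs \<subseteq> A \<Longrightarrow> set ys \<subseteq> A \<Longrightarrow> (\<forall>i < ar f. (xs ! i, ys ! i) \<in> \<theta>) \<Longrightarrow>
    (F f xs, F f ys) \<in> \<theta>"
  unfolding congruence_def by blast

lemma quot_ops_classes:
  assumes cg: "congruence ar A F \<theta>" and xs: "length xs = ar f" "set xs \<subseteq> A"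
  shows "quot_ops F \<theta> f (map (\<lambda>x. \<theta>``{x}) xs) = \<theta>``{F f xs}"
proof -
  have eq: "equiv A \<theta>" using cg unfolding congruence_def by auto
  define ys where "ys = map (\<lambda>x. SOME y. y \<in> \<theta>``{x}) xs"
  have "(SOME y. y \<in> \<theta>``{x}) \<in> \<theta>``{x}" if "x \<in> A" for x
    using that eq by (metis equiv_class_self someI)
  then have rel: "(SOME y. y \<in> \<theta>``{x}) \<in> A \<and> ((SOME y. y \<in> \<theta>``{x}), x) \<in> \<theta>" if "x \<in> A" for x
    using that eq unfolding equiv_def sym_def refl_on_def by blast
  have "(ys ! i, xs ! i) \<in> \<theta>" if "i < ar f" for i
    using that xs rel[of "xs ! i"] by (simp add: ys_def subset_iff)
  moreover have "set ys \<subseteq> A" using xs rel by (auto simp: ys_def)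
  ultimately have "(F f ys, F f xs) \<in> \<theta>"
    using cg xs by (intro congruenceD) (auto simp: ys_def)
  then show ?thesis
    using eq unfolding quot_ops_def ys_def by (simp add: comp_def equiv_class_eq)
qed

lemma eval_quot_ops:
  assumes alg: "is_alg ar A F" and cg: "congruence ar A F \<theta>" and a: "\<forall>i. a i \<in> A"
  shows "wf_trm ar t \<Longrightarrow> eval (quot_ops F \<theta>) (\<lambda>i. \<theta>``{a i}) t = \<theta>``{eval F a t}"
proof (induction t)
  case (App f ts)
  then have "eval (quot_ops F \<theta>) (\<lambda>i. \<theta>``{a i}) (App f ts)
      = quot_ops F \<theta> f (map (\<lambda>x. \<theta>``{x}) (map (eval F a) ts))"
    by (simp cong: map_cong)
  also have "\<dots> = \<theta>``{F f (map (eval F a) ts)}"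
    using App.prems eval_closed[OF alg a] by (intro quot_ops_classes[OF cg]) auto
  finally show ?case by simp
qed simp

lemma is_alg_quotient:
  assumes alg: "is_alg ar A F" and cg: "congruence ar A F \<theta>"
  shows "is_alg ar (A // \<theta>) (quot_ops F \<theta>)"
  unfolding is_alg_def
proof (intro conjI allI impI)
  have eq: "equiv A \<theta>" using cg unfolding congruence_def by auto
  show "A // \<theta> \<noteq> {}" using alg unfolding is_alg_def quotient_def by auto
  fix f Xs assume Xs: "length Xs = ar f \<and> set Xs \<subseteq> A // \<theta>"
  have "(SOME x. x \<in> X) \<in> A" if "X \<in> A // \<theta>" for X
  proof -
    from that obtain x where x: "x \<in> A" "X = \<theta>``{x}" by (rule quotientE)
    then have "(SOME x. x \<in> X) \<in> X" using eq equiv_class_self by (metis someI)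
    then show ?thesis using x equiv_type[OF eq] by blast
  qed
  then have "set (map (\<lambda>X. SOME x. x \<in> X) Xs) \<subseteq> A"
    using Xs by auto
  then have "F f (map (\<lambda>X. SOME x. x \<in> X) Xs) \<in> A"
    using alg Xs unfolding is_alg_def by auto
  then show "quot_ops F \<theta> f Xs \<in> A // \<theta>"
    unfolding quot_ops_def by (rule quotientI)
qed

lemma satisfies_quotient_iff:
  assumes alg: "is_alg ar A F" and cg: "congruence ar A F \<theta>"
    and wf: "wf_trm ar p" "wf_trm ar q"
  shows "satisfies (A // \<theta>) (quot_ops F \<theta>) (p, q) \<longleftrightarrow>
    (\<forall>a. (\<forall>i. a i \<in> A) \<longrightarrow> (eval F a p, eval F a q) \<in> \<theta>)"
proof -
  have eq: "equiv A \<theta>" using cg unfolding congruence_def by auto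
  have rel_iff: "(eval F a p, eval F a q) \<in> \<theta> \<longleftrightarrow>
      eval (quot_ops F \<theta>) (\<lambda>i. \<theta>``{a i}) p = eval (quot_ops F \<theta>) (\<lambda>i. \<theta>``{a i}) q"
    if a: "\<forall>i. a i \<in> A" for a
    using eval_quot_ops[OF alg cg a] wf eval_closed[OF alg a] eq
    by (simp add: equiv_class_eq_iff)
  show ?thesis
  proof
    assume sat: "satisfies (A // \<theta>) (quot_ops F \<theta>) (p, q)"
    show "\<forall>a. (\<forall>i. a i \<in> A) \<longrightarrow> (eval F a p, eval F a q) \<in> \<theta>"
    proof (intro allI impI)
      fix a :: "nat \<Rightarrow> _" assume a: "\<forall>i. a i \<in> A"
      then have "\<forall>i. \<theta>``{a i} \<in> A // \<theta>" by (auto intro: quotientI)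
      with sat a show "(eval F a p, eval F a q) \<in> \<theta>"
        unfolding satisfies_def rel_iff[OF a] by auto
    qed
  next
    assume rel: "\<forall>a. (\<forall>i. a i \<in> A) \<longrightarrow> (eval F a p, eval F a q) \<in> \<theta>"
    show "satisfies (A // \<theta>) (quot_ops F \<theta>) (p, q)"
      unfolding satisfies_def
    proof (intro allI impI)
      fix c :: "nat \<Rightarrow> _" assume "\<forall>i. c i \<in> A // \<theta>"
      then have "\<forall>i. \<exists>x. x \<in> A \<and> c i = \<theta>``{x}" by (meson quotientE)
      then obtain a where a: "\<forall>i. a i \<in> A" and c: "c = (\<lambda>i. \<theta>``{a i})"
        by (auto dest!: choice)
      show "eval (quot_ops F \<theta>) c (fst (p, q)) = eval (quot_ops F \<theta>) c (snd (p, q))"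
        using rel a rel_iff[OF a] unfolding c by simp
    qed
  qed
qed

definition transport_ops :: "('a \<Rightarrow> 'b) \<Rightarrow> 'a set \<Rightarrow> ('f \<Rightarrow> 'a list \<Rightarrow> 'a) \<Rightarrow> 'f \<Rightarrow> 'b list \<Rightarrow> 'b" where
  "transport_ops \<iota> S F f ys = \<iota> (F f (map (inv_into S \<iota>) ys))"

lemma eval_transport_ops:
  assumes inj: "inj_on \<iota> S" and alg: "is_alg ar S F" and a: "\<forall>i. a i \<in> S"
  shows "wf_trm ar t \<Longrightarrow> eval (transport_ops \<iota> S F) (\<lambda>i. \<iota> (a i)) t = \<iota> (eval F a t)"
proof (induction t)
  case (App f ts)
  have "inv_into S \<iota> (\<iota> (eval F a t)) = eval F a t" if "t \<in> set ts" for t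
    using App.prems that eval_closed[OF alg a] inv_into_f_f[OF inj] by simp
  with App show ?case by (simp add: transport_ops_def cong: map_cong)
qed simp

lemma is_alg_transport:
  assumes inj: "inj_on \<iota> S" and alg: "is_alg ar S F"
  shows "is_alg ar (\<iota> ` S) (transport_ops \<iota> S F)"
proof -
  have "F f (map (inv_into S \<iota>) ys) \<in> S" if "length ys = ar f" "set ys \<subseteq> \<iota> ` S" for f ys
  proof -
    have "set (map (inv_into S \<iota>) ys) \<subseteq> S" using that(2) by (auto intro: inv_into_into)
    then show ?thesis using that(1) alg unfolding is_alg_def by auto
  qed
  then show ?thesis
    using alg unfolding is_alg_def transport_ops_def by auto
qed

lemma satisfies_transport_iff:
  assumes inj: "inj_on \<iota> S" and alg: "is_alg ar S F" and wf: "wf_ident ar e"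
  shows "satisfies (\<iota> ` S) (transport_ops \<iota> S F) e \<longleftrightarrow> satisfies S F e"
proof -
  have wf_e: "wf_trm ar (fst e)" "wf_trm ar (snd e)" using wf unfolding wf_ident_def by auto
  have transport_eq: "eval (transport_ops \<iota> S F) (\<lambda>i. \<iota> (a i)) (fst e)
        = eval (transport_ops \<iota> S F) (\<lambda>i. \<iota> (a i)) (snd e) \<longleftrightarrow>
      eval F a (fst e) = eval F a (snd e)" if a: "\<forall>i. a i \<in> S" for a
    using eval_transport_ops[OF inj alg a] wf_e eval_closed[OF alg a] inj
    by (auto dest: inj_onD)
  have assignments: "(\<forall>i. c i \<in> \<iota> ` S) \<longleftrightarrow> (\<exists>a. (\<forall>i. a i \<in> S) \<and> c = (\<lambda>i. \<iota> (a i)))"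
    for c :: "nat \<Rightarrow> _"
  proof
    assume "\<forall>i. c i \<in> \<iota> ` S"
    then show "\<exists>a. (\<forall>i. a i \<in> S) \<and> c = (\<lambda>i. \<iota> (a i))"
      by (intro exI[of _ "\<lambda>i. inv_into S \<iota> (c i)"]) (auto intro: inv_into_into simp: f_inv_into_f)
  qed auto
  show ?thesis
    unfolding satisfies_def assignments using transport_eq by blast
qed

lemma Mod_subalgebra: "Mod ar \<Sigma> X F \<Longrightarrow> is_alg ar S F \<Longrightarrow> S \<subseteq> X \<Longrightarrow> Mod ar \<Sigma> S F"
  unfolding Mod_def satisfies_def by blast

lemma Mod_transport:
  assumes inj: "inj_on \<iota> S" and wf_\<Sigma>: "\<forall>e\<in>\<Sigma>. wf_ident ar e" and S: "Mod ar \<Sigma> S F"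
  shows "Mod ar \<Sigma> (\<iota> ` S) (transport_ops \<iota> S F)"
proof -
  have alg: "is_alg ar S F" using S unfolding Mod_def by blast
  have "satisfies (\<iota> ` S) (transport_ops \<iota> S F) e" if "e \<in> \<Sigma>" for e
  proof -
    have "satisfies S F e" "wf_ident ar e" using that S wf_\<Sigma> unfolding Mod_def by auto
    then show ?thesis using satisfies_transport_iff[OF inj alg] by simp
  qed
  then show ?thesis using is_alg_transport[OF inj alg] unfolding Mod_def by simp
qed

lemma is_alg_generated: "is_alg ar (eval F b ` {t. wf_trm ar t}) F"
  unfolding is_alg_def
proof (intro conjI allI impI)
  have "b v \<in> eval F b ` {t. wf_trm ar t}" for v
    by (rule image_eqI[of _ _ "Var v"]) simp_all
  then show "eval F b ` {t. wf_trm ar t} \<noteq> {}" by blast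
  fix f ys assume ys: "length ys = ar f \<and> set ys \<subseteq> eval F b ` {t. wf_trm ar t}"
  then have "ys \<in> lists (eval F b ` {t. wf_trm ar t})" by auto
  then obtain ts where "ys = map (eval F b) ts" "set ts \<subseteq> {t. wf_trm ar t}"
    unfolding lists_image by auto
  with ys have "F f ys = eval F b (App f ts)" "wf_trm ar (App f ts)" by auto
  then show "F f ys \<in> eval F b ` {t. wf_trm ar t}" by blast
qed

text \<open>Id_of only tests identities on algebras carried by terms.  The subalgebra generated
  by an assignment is an image of the term algebra, so it has an isomorphic copy there.\<close>
lemma Id_of_sound:
  fixes ar :: "'f \<Rightarrow> nat" and X :: "'a set" and F :: "'f \<Rightarrow> 'a list \<Rightarrow> 'a"
  assumes wf_\<Sigma>: "\<forall>e\<in>\<Sigma>. wf_ident ar e" and X: "Mod ar \<Sigma> X F" and e: "e \<in> Id_of ar \<Sigma>"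
  shows "satisfies X F e"
  unfolding satisfies_def
proof (intro allI impI)
  fix b :: "nat \<Rightarrow> 'a" assume b: "\<forall>i. b i \<in> X"
  define W where "W = {t :: ('f, nat) trm. wf_trm ar t}"
  define S where "S = eval F b ` W"
  define \<iota> where "\<iota> = inv_into W (eval F b)"
  have inj: "inj_on \<iota> S" unfolding \<iota>_def S_def by (rule inj_on_inv_into) simp
  have alg: "is_alg ar S F" unfolding S_def W_def by (rule is_alg_generated)
  have "S \<subseteq> X"
    using eval_closed[of ar X F b] X b unfolding S_def W_def Mod_def by auto
  then have "Mod ar \<Sigma> S F" using Mod_subalgebra X alg by blast
  then have "Mod ar \<Sigma> (\<iota> ` S) (transport_ops \<iota> S F)" by (rule Mod_transport[OF inj wf_\<Sigma>])
  then have "satisfies (\<iota> ` S) (transport_ops \<iota> S F) e"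
    using e unfolding Id_of_def by simp
  then have "satisfies S F e"
    using satisfies_transport_iff[OF inj alg] e unfolding Id_of_def by simp
  moreover have "b i \<in> S" for i
    unfolding S_def W_def by (rule image_eqI[of _ _ "Var i"]) simp_all
  ultimately show "eval F b (fst e) = eval F b (snd e)" unfolding satisfies_def by blast
qed

lemma prolong_setI:
  assumes uv: "(u, v) \<in> Q" and m: "1 \<le> m" and s: "\<forall>y. s y \<in> T ar m"
  shows "(subst s u, subst s v) \<in> prolong_set ar Q"
proof -
  have "(subst s u, subst s v) \<in> prolong_m ar m (u, v)"
    using s unfolding prolong_m_def by auto
  with uv m show ?thesis unfolding prolong_set_def prolong_def by blast
qed

lemma prolong_setE:
  assumes pl: "plural ar" and wf_Q: "\<forall>e\<in>Q. wf_ident ar e" and e': "e' \<in> prolong_set ar Q"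
  obtains u v m s where "(u, v) \<in> Q" "1 \<le> m" "\<forall>y. s y \<in> T ar m" "e' = (subst s u, subst s v)"
proof -
  obtain e0 m where e0: "e0 \<in> Q" and m: "1 \<le> m" and "e' \<in> prolong_m ar m e0"
    using e' unfolding prolong_set_def prolong_def by blast
  moreover obtain u v where "e0 = (u, v)" by fastforce
  ultimately obtain s where uv: "(u, v) \<in> Q" and s: "\<forall>y \<in> vars u \<union> vars v. s y \<in> T ar m"
    and e'_eq: "e' = (subst s u, subst s v)"
    unfolding prolong_m_def by auto
  have "wf_trm ar u" using wf_Q uv unfolding wf_ident_def by auto
  then obtain y0 where y0: "y0 \<in> vars u" using vars_nonempty[OF pl] by blast
  define s' where "s' y = (if y \<in> vars u \<union> vars v then s y else s y0)" for y
  have "\<forall>y. s' y \<in> T ar m" using s y0 unfolding s'_def by simp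
  moreover have "e' = (subst s' u, subst s' v)"
    unfolding e'_eq s'_def by (auto intro: subst_cong)
  ultimately show ?thesis using that uv m by blast
qed

lemma regular_prolong_set:
  assumes pl: "plural ar" and wf_Q: "\<forall>e\<in>Q. wf_ident ar e"
  shows "\<forall>e\<in>prolong_set ar Q. regular e"
proof
  fix e' assume e': "e' \<in> prolong_set ar Q"
  obtain u v m s where uv: "(u, v) \<in> Q" and "1 \<le> m" and s: "\<forall>y. s y \<in> T ar m"
    and e'_eq: "e' = (subst s u, subst s v)"
    by (rule prolong_setE[OF pl wf_Q e'])
  have "vars (subst s t) = {1..m}" if "wf_trm ar t" for t
    using vars_nonempty[OF pl that] s by (simp add: vars_subst T_def)
  then show "regular e'"
    using wf_Q uv unfolding e'_eq regular_def wf_ident_def by auto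
qed

lemma wf_Id_of: "\<forall>e\<in>Id_of ar \<Sigma>. wf_ident ar e"
  by (simp add: Id_of_def)

lemma subset_Id_of: "\<forall>e\<in>\<Sigma>. wf_ident ar e \<Longrightarrow> \<Sigma> \<subseteq> Id_of ar \<Sigma>"
  unfolding Id_of_def Mod_def by blast

lemma in_VoS_imp_in_Vp:
  fixes ar :: "'f \<Rightarrow> nat" and A :: "'a set"
  assumes pl: "plural ar" and wf_\<Sigma>: "\<forall>e\<in>\<Sigma>. wf_ident ar e" and VoS: "in_VoS ar \<Sigma> A F"
  shows "in_Vp ar \<Sigma> A F"
proof -
  obtain \<theta> where alg: "is_alg ar A F" and cg: "congruence ar A F \<theta>"
    and S: "in_S ar (A // \<theta>) (quot_ops F \<theta>)" and classes: "\<forall>X \<in> A // \<theta>. Mod ar \<Sigma> X F"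
    using VoS unfolding in_VoS_def by blast
  have "satisfies A F e'" if e': "e' \<in> prolong_set ar (Id_of ar \<Sigma>)" for e'
  proof -
    obtain u v m s where uv: "(u, v) \<in> Id_of ar \<Sigma>" and "1 \<le> m" and s: "\<forall>y. s y \<in> T ar m"
      and e'_eq: "e' = (subst s u, subst s v)"
      by (rule prolong_setE[OF pl wf_Id_of e'])
    have wf_s: "wf_trm ar (s y)" for y using s by (simp add: T_def)
    show ?thesis
      unfolding satisfies_def
    proof (intro allI impI)
      fix a :: "nat \<Rightarrow> 'a" assume a: "\<forall>i. a i \<in> A"
      define X where "X = \<theta>``{eval F a (s 0)}"
      have "(eval F a (s 0), eval F a (s y)) \<in> \<theta>" for y
      proof -
        have "wf_ident ar (s 0, s y) \<and> regular (s 0, s y)"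
          using s by (simp add: T_def wf_ident_def regular_def)
        then have "satisfies (A // \<theta>) (quot_ops F \<theta>) (s 0, s y)"
          using S unfolding in_S_def Mod_def by blast
        then show ?thesis
          using satisfies_quotient_iff[OF alg cg wf_s wf_s] a by blast
      qed
      then have b: "\<forall>y. eval F a (s y) \<in> X" unfolding X_def by simp
      have "X \<in> A // \<theta>" unfolding X_def using eval_closed[OF alg a wf_s] by (rule quotientI)
      then have "satisfies X F (u, v)"
        using classes Id_of_sound[OF wf_\<Sigma> _ uv] by blast
      then have "eval F (\<lambda>y. eval F a (s y)) u = eval F (\<lambda>y. eval F a (s y)) v"
        using b unfolding satisfies_def by simp
      then show "eval F a (fst e') = eval F a (snd e')"
        unfolding e'_eq by (simp add: eval_subst)
    qed
  qed
  then show ?thesis using alg unfolding in_Vp_def Mod_def by blast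
qed

text \<open>Equational derivability from P.  Substitutions are restricted to well-formed terms,
  the only ones that evaluate inside a carrier.\<close>
inductive derivable :: "('f \<Rightarrow> nat) \<Rightarrow> 'f ident set \<Rightarrow> ('f, nat) trm \<Rightarrow> ('f, nat) trm \<Rightarrow> bool"
  for ar P where
  derivable_axiom: "(u, v) \<in> P \<Longrightarrow> derivable ar P u v"
| derivable_refl: "derivable ar P t t"
| derivable_sym: "derivable ar P u v \<Longrightarrow> derivable ar P v u"
| derivable_trans: "derivable ar P u v \<Longrightarrow> derivable ar P v w \<Longrightarrow> derivable ar P u w"
| derivable_App: "list_all2 (derivable ar P) ts ts' \<Longrightarrow> derivable ar P (App f ts) (App f ts')"
| derivable_subst:
    "derivable ar P u v \<Longrightarrow> \<forall>i. wf_trm ar (s i) \<Longrightarrow> derivable ar P (subst s u) (subst s v)"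

lemma derivable_sound:
  assumes M: "Mod ar P A F"
  shows "derivable ar P u v \<Longrightarrow> \<forall>i. a i \<in> A \<Longrightarrow> eval F a u = eval F a v"
proof (induction u v arbitrary: a rule: derivable.induct)
  case (derivable_axiom u v)
  then show ?case using M unfolding Mod_def satisfies_def by fastforce
next
  case (derivable_App ts ts' f)
  then have "map (eval F a) ts = map (eval F a) ts'"
    by (auto simp: list_all2_conv_all_nth intro: nth_equalityI)
  then show ?case by simp
next
  case (derivable_subst u v s)
  have "\<forall>i. eval F a (s i) \<in> A"
    using eval_closed M derivable_subst unfolding Mod_def by blast
  then show ?case using derivable_subst by (simp add: eval_subst)
qed auto

lemma derivable_vars:
  assumes "\<forall>e\<in>P. regular e"
  shows "derivable ar P u v \<Longrightarrow> vars u = vars v"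
proof (induction u v rule: derivable.induct)
  case (derivable_axiom u v)
  then show ?case using assms unfolding regular_def by fastforce
next
  case (derivable_App ts ts' f)
  then show ?case by (auto simp: list_all2_conv_all_nth set_conv_nth)
next
  case (derivable_subst u v s)
  then show ?case by (simp add: vars_subst)
qed auto

lemma derivable_subst_args:
  "\<forall>i. derivable ar P (s i) (s' i) \<Longrightarrow> derivable ar P (subst s t) (subst s' t)"
proof (induction t)
  case (App f ts)
  then have "list_all2 (derivable ar P) (map (subst s) ts) (map (subst s') ts)"
    by (auto simp: list_all2_conv_all_nth)
  then show ?case by (simp add: derivable_App)
qed simp

lemma derivable_prolong_instance:
  assumes uv: "(u, v) \<in> Q" and Y: "finite Y" "Y \<noteq> {}"
    and c: "\<forall>i. wf_trm ar (c i) \<and> vars (c i) = Y"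
  shows "derivable ar (prolong_set ar Q) (subst c u) (subst c v)"
proof -
  define m where "m = card Y"
  have m: "1 \<le> m" using Y by (simp add: m_def Suc_le_eq card_gt_0_iff)
  obtain \<pi> where \<pi>: "bij_betw \<pi> Y {1..m}"
    using bij_betw_iff_card[OF Y(1), of "{1..m}"] by (auto simp: m_def)
  define \<psi> where "\<psi> = the_inv_into Y \<pi>"
  have \<psi>_\<pi>: "\<psi> (\<pi> y) = y" if "y \<in> Y" for y
    using \<pi> that unfolding \<psi>_def bij_betw_def by (simp add: the_inv_into_f_f)
  define d where "d i = subst (\<lambda>y. Var (\<pi> y)) (c i)" for i
  have "d i \<in> T ar m" for i
  proof -
    have "wf_trm ar (d i)" unfolding d_def using c by (simp add: wf_subst)
    moreover have "vars (d i) = \<pi> ` Y" using c by (auto simp: d_def vars_subst)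
    ultimately show ?thesis using \<pi> by (simp add: T_def bij_betw_def)
  qed
  then have "derivable ar (prolong_set ar Q) (subst d u) (subst d v)"
    using uv m by (simp add: prolong_setI derivable_axiom)
  then have "derivable ar (prolong_set ar Q)
      (subst (\<lambda>y. Var (\<psi> y)) (subst d u)) (subst (\<lambda>y. Var (\<psi> y)) (subst d v))"
    by (rule derivable_subst) simp
  moreover have "subst (\<lambda>y. Var (\<psi> y)) (d i) = c i" for i
  proof -
    have "subst (\<lambda>y. Var (\<psi> y)) (d i) = subst (\<lambda>y. Var (\<psi> (\<pi> y))) (c i)"
      by (simp add: d_def subst_subst)
    also have "\<dots> = subst Var (c i)" using c \<psi>_\<pi> by (intro subst_cong) auto
    finally show ?thesis by simp
  qed
  ultimately show ?thesis by (simp add: subst_subst)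
qed

text \<open>The free algebra of P is realised inside the term type, the carrier type on which the
  hypothesis about V o S is available, by choosing a well-formed representative in every
  derivability class.\<close>

definition free_rep :: "('f \<Rightarrow> nat) \<Rightarrow> 'f ident set \<Rightarrow> ('f, nat) trm \<Rightarrow> ('f, nat) trm" where
  "free_rep ar P t = (SOME t'. derivable ar P t' t \<and> wf_trm ar t')"

definition free_carrier :: "('f \<Rightarrow> nat) \<Rightarrow> 'f ident set \<Rightarrow> ('f, nat) trm set" where
  "free_carrier ar P = free_rep ar P ` {t. wf_trm ar t}"

definition free_ops :: "('f \<Rightarrow> nat) \<Rightarrow> 'f ident set \<Rightarrow> 'f \<Rightarrow> ('f, nat) trm list \<Rightarrow> ('f, nat) trm" where
  "free_ops ar P f ts = free_rep ar P (App f ts)"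

lemma free_rep: "wf_trm ar t \<Longrightarrow> derivable ar P (free_rep ar P t) t \<and> wf_trm ar (free_rep ar P t)"
  unfolding free_rep_def by (rule someI[of _ t]) (simp add: derivable_refl)

lemma free_rep_cong:
  assumes "derivable ar P t t'"
  shows "free_rep ar P t = free_rep ar P t'"
proof -
  have "(\<lambda>t''. derivable ar P t'' t \<and> wf_trm ar t'') = (\<lambda>t''. derivable ar P t'' t' \<and> wf_trm ar t'')"
    using assms derivable_sym derivable_trans by blast
  then show ?thesis unfolding free_rep_def by simp
qed

lemma free_rep_in_carrier: "wf_trm ar t \<Longrightarrow> free_rep ar P t \<in> free_carrier ar P"
  unfolding free_carrier_def by simp

lemma free_carrierD:
  assumes "x \<in> free_carrier ar P"
  shows "free_rep ar P x = x \<and> wf_trm ar x"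
proof -
  obtain t where t: "wf_trm ar t" "x = free_rep ar P t"
    using assms unfolding free_carrier_def by blast
  then have "derivable ar P x t" "wf_trm ar x" using free_rep by blast+
  then show ?thesis using free_rep_cong t(2) by metis
qed

lemma free_carrier_derivable_eq:
  "x \<in> free_carrier ar P \<Longrightarrow> y \<in> free_carrier ar P \<Longrightarrow> derivable ar P x y \<Longrightarrow> x = y"
  using free_carrierD free_rep_cong by metis

lemma free_ops_in_carrier:
  assumes "length xs = ar f" "set xs \<subseteq> free_carrier ar P"
  shows "free_ops ar P f xs \<in> free_carrier ar P"
proof -
  have "wf_trm ar (App f xs)" using assms free_carrierD by auto
  then show ?thesis unfolding free_ops_def by (rule free_rep_in_carrier)
qed

lemma is_alg_free: "is_alg ar (free_carrier ar P) (free_ops ar P)"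
  unfolding is_alg_def
  using free_rep_in_carrier[of ar "Var 0" P] free_ops_in_carrier by auto

lemma eval_free_ops:
  assumes c: "\<forall>i. c i \<in> free_carrier ar P"
  shows "wf_trm ar t \<Longrightarrow>
    eval (free_ops ar P) c t \<in> free_carrier ar P \<and> derivable ar P (eval (free_ops ar P) c t) (subst c t)"
proof (induction t)
  case (Var x)
  then show ?case using c by (simp add: derivable_refl)
next
  case (App f ts)
  let ?ts' = "map (eval (free_ops ar P) c) ts"
  have eval_App: "eval (free_ops ar P) c (App f ts) = free_rep ar P (App f ?ts')"
    by (simp add: free_ops_def)
  have wf: "wf_trm ar (App f ?ts')" using App free_carrierD by auto
  have "list_all2 (derivable ar P) ?ts' (map (subst c) ts)"
    using App by (auto simp: list_all2_conv_all_nth)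
  then have "derivable ar P (App f ?ts') (subst c (App f ts))"
    by (simp add: derivable_App)
  then have "derivable ar P (free_rep ar P (App f ?ts')) (subst c (App f ts))"
    using free_rep[OF wf] derivable_trans by blast
  then show ?case unfolding eval_App using free_rep_in_carrier[OF wf] by blast
qed

lemma derivable_if_free_satisfies:
  assumes wf: "wf_trm ar p" "wf_trm ar q"
    and sat: "satisfies (free_carrier ar P) (free_ops ar P) (p, q)"
  shows "derivable ar P p q"
proof -
  define c where "c i = free_rep ar P (Var i)" for i
  have c: "\<forall>i. c i \<in> free_carrier ar P" by (simp add: c_def free_rep_in_carrier)
  have subst_c: "derivable ar P t (subst c t)" for t
  proof -
    have "derivable ar P (c i) (Var i)" for i
      using free_rep[of ar "Var i" P] by (simp add: c_def)
    then have "\<forall>i. derivable ar P (Var i) (c i)" by (simp add: derivable_sym)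
    then show ?thesis using derivable_subst_args[of ar P Var c t] by simp
  qed
  have "eval (free_ops ar P) c p = eval (free_ops ar P) c q"
    using sat c unfolding satisfies_def by simp
  then have "derivable ar P (subst c p) (subst c q)"
    using eval_free_ops[OF c wf(1)] eval_free_ops[OF c wf(2)] derivable_sym derivable_trans by metis
  then show ?thesis
    using subst_c derivable_sym derivable_trans by metis
qed

definition same_vars :: "('f, 'v) trm set \<Rightarrow> ('f, 'v) trm rel" where
  "same_vars B = {(x, y). x \<in> B \<and> y \<in> B \<and> vars x = vars y}"

lemma equiv_same_vars: "equiv B (same_vars B)"
  unfolding same_vars_def equiv_def refl_on_def sym_def trans_def by auto

lemma vars_eval_free_ops:
  assumes reg: "\<forall>e\<in>P. regular e" and c: "\<forall>i. c i \<in> free_carrier ar P" and t: "wf_trm ar t"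
  shows "vars (eval (free_ops ar P) c t) = vars (subst c t)"
  using eval_free_ops[OF c t] derivable_vars[OF reg] by blast

lemma vars_free_ops:
  assumes reg: "\<forall>e\<in>P. regular e" and xs: "length xs = ar f" "set xs \<subseteq> free_carrier ar P"
  shows "vars (free_ops ar P f xs) = (\<Union>x\<in>set xs. vars x)"
proof -
  have "wf_trm ar (App f xs)" using xs free_carrierD by auto
  then show ?thesis
    using free_rep derivable_vars[OF reg] unfolding free_ops_def by (metis vars.simps(2))
qed

lemma congruence_same_vars_free:
  assumes reg: "\<forall>e\<in>P. regular e"
  shows "congruence ar (free_carrier ar P) (free_ops ar P) (same_vars (free_carrier ar P))"
  unfolding congruence_def
proof (intro conjI allI impI equiv_same_vars)
  fix f xs ys
  assume "length xs = ar f \<and> length ys = ar f \<and> set xs \<subseteq> free_carrier ar P \<and>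
      set ys \<subseteq> free_carrier ar P \<and> (\<forall>i<ar f. (xs ! i, ys ! i) \<in> same_vars (free_carrier ar P))"
  then have xs: "length xs = ar f" "set xs \<subseteq> free_carrier ar P"
    and ys: "length ys = ar f" "set ys \<subseteq> free_carrier ar P"
    and rel: "\<forall>i<ar f. vars (xs ! i) = vars (ys ! i)"
    unfolding same_vars_def by auto
  have "map vars xs = map vars ys"
    using xs(1) ys(1) rel by (intro nth_equalityI) auto
  then have "vars (free_ops ar P f xs) = vars (free_ops ar P f ys)"
    using vars_free_ops[OF reg xs] vars_free_ops[OF reg ys] by (metis list.set_map)
  then show "(free_ops ar P f xs, free_ops ar P f ys) \<in> same_vars (free_carrier ar P)"
    using free_ops_in_carrier[OF xs] free_ops_in_carrier[OF ys] unfolding same_vars_def by blast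
qed

lemma in_S_free_quotient:
  fixes ar :: "'f \<Rightarrow> nat" and P :: "'f ident set"
  assumes reg: "\<forall>e\<in>P. regular e"
  defines "\<theta> \<equiv> same_vars (free_carrier ar P)"
  shows "in_S ar (free_carrier ar P // \<theta>) (quot_ops (free_ops ar P) \<theta>)"
  unfolding in_S_def Mod_def
proof (intro conjI ballI)
  have cg: "congruence ar (free_carrier ar P) (free_ops ar P) \<theta>"
    unfolding \<theta>_def using congruence_same_vars_free[OF reg] .
  then show "is_alg ar (free_carrier ar P // \<theta>) (quot_ops (free_ops ar P) \<theta>)"
    by (rule is_alg_quotient[OF is_alg_free])
  fix e assume "e \<in> {e. wf_ident ar e \<and> regular e}"
  then obtain u v where e: "e = (u, v)" and wf: "wf_trm ar u" "wf_trm ar v"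
    and uv: "vars u = vars v"
    unfolding wf_ident_def regular_def by (cases e) auto
  have "(eval (free_ops ar P) c u, eval (free_ops ar P) c v) \<in> \<theta>"
    if c: "\<forall>i. c i \<in> free_carrier ar P" for c
    using eval_free_ops[OF c] vars_eval_free_ops[OF reg c] wf uv
    unfolding \<theta>_def same_vars_def by (simp add: vars_subst)
  then show "satisfies (free_carrier ar P // \<theta>) (quot_ops (free_ops ar P) \<theta>) e"
    unfolding e by (simp add: satisfies_quotient_iff[OF is_alg_free cg wf])
qed

lemma Mod_free_class:
  fixes ar :: "'f \<Rightarrow> nat" and \<Sigma> :: "'f ident set"
  defines "P \<equiv> prolong_set ar (Id_of ar \<Sigma>)"
  assumes pl: "plural ar" and wf_\<Sigma>: "\<forall>e\<in>\<Sigma>. wf_ident ar e"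
    and X: "X \<in> free_carrier ar P // same_vars (free_carrier ar P)"
  shows "Mod ar \<Sigma> X (free_ops ar P)"
proof -
  have reg: "\<forall>e\<in>P. regular e" unfolding P_def by (rule regular_prolong_set[OF pl wf_Id_of])
  obtain t0 where t0: "t0 \<in> free_carrier ar P" and X_eq: "X = {t \<in> free_carrier ar P. vars t = vars t0}"
    using X unfolding same_vars_def by (auto elim!: quotientE)
  have Y: "finite (vars t0)" "vars t0 \<noteq> {}"
    using finite_vars vars_nonempty[OF pl] free_carrierD[OF t0] by blast+
  have "free_ops ar P f xs \<in> X" if xs: "length xs = ar f" "set xs \<subseteq> X" for f xs
  proof -
    have "xs \<noteq> []" using pl xs(1) unfolding plural_def by (metis list.size(3) not_one_le_zero)
    then have "(\<Union>x\<in>set xs. vars x) = vars t0" using xs(2) X_eq by (cases xs) auto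
    moreover have xs_carrier: "set xs \<subseteq> free_carrier ar P" using xs(2) X_eq by auto
    ultimately show ?thesis
      using vars_free_ops[OF reg xs(1) xs_carrier] free_ops_in_carrier[OF xs(1) xs_carrier] X_eq
      by auto
  qed
  then have alg: "is_alg ar X (free_ops ar P)"
    using t0 X_eq unfolding is_alg_def by blast
  have "satisfies X (free_ops ar P) (u, v)" if uv: "(u, v) \<in> \<Sigma>" for u v
    unfolding satisfies_def
  proof (intro allI impI)
    fix c :: "nat \<Rightarrow> ('f, nat) trm" assume "\<forall>i. c i \<in> X"
    then have c: "\<forall>i. c i \<in> free_carrier ar P" and c_vars: "\<forall>i. vars (c i) = vars t0"
      using X_eq by auto
    have wf: "wf_trm ar u" "wf_trm ar v" using wf_\<Sigma> uv unfolding wf_ident_def by auto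
    have "(u, v) \<in> Id_of ar \<Sigma>" using subset_Id_of[OF wf_\<Sigma>] uv by blast
    then have "derivable ar P (subst c u) (subst c v)"
      unfolding P_def using Y c c_vars free_carrierD by (intro derivable_prolong_instance) blast+
    then have "derivable ar P (eval (free_ops ar P) c u) (eval (free_ops ar P) c v)"
      using eval_free_ops[OF c wf(1)] eval_free_ops[OF c wf(2)] derivable_sym derivable_trans by metis
    then show "eval (free_ops ar P) c (fst (u, v)) = eval (free_ops ar P) c (snd (u, v))"
      using free_carrier_derivable_eq eval_free_ops[OF c wf(1)] eval_free_ops[OF c wf(2)] by auto
  qed
  then show ?thesis using alg unfolding Mod_def by auto
qed

lemma free_in_VoS:
  fixes ar :: "'f \<Rightarrow> nat" and \<Sigma> :: "'f ident set"
  defines "P \<equiv> prolong_set ar (Id_of ar \<Sigma>)"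
  assumes pl: "plural ar" and wf_\<Sigma>: "\<forall>e\<in>\<Sigma>. wf_ident ar e"
  shows "in_VoS ar \<Sigma> (free_carrier ar P) (free_ops ar P)"
proof -
  have reg: "\<forall>e\<in>P. regular e" unfolding P_def by (rule regular_prolong_set[OF pl wf_Id_of])
  show ?thesis
    unfolding in_VoS_def
    using is_alg_free congruence_same_vars_free[OF reg] in_S_free_quotient[OF reg]
      Mod_free_class[OF pl wf_\<Sigma>] unfolding P_def by blast
qed

lemma in_Vp_satisfies_VoS_identity:
  fixes ar :: "'f \<Rightarrow> nat" and A :: "'a set"
  assumes pl: "plural ar" and wf_\<Sigma>: "\<forall>e\<in>\<Sigma>. wf_ident ar e"
    and VoS_sat: "\<forall>(B :: ('f, nat) trm set) G. in_VoS ar \<Sigma> B G \<longrightarrow> satisfies B G e"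
    and wf_e: "wf_ident ar e" and Vp: "in_Vp ar \<Sigma> A F"
  shows "satisfies A F e"
proof -
  define P where "P = prolong_set ar (Id_of ar \<Sigma>)"
  have "satisfies (free_carrier ar P) (free_ops ar P) e"
    using VoS_sat free_in_VoS[OF pl wf_\<Sigma>] unfolding P_def by blast
  then have "derivable ar P (fst e) (snd e)"
    using derivable_if_free_satisfies wf_e unfolding wf_ident_def by (metis prod.collapse)
  moreover have "Mod ar P A F" using Vp unfolding in_Vp_def P_def .
  ultimately show ?thesis
    unfolding satisfies_def using derivable_sound by blast
qed

theorem corollary3p4:
  fixes ar :: "'f \<Rightarrow> nat" and \<Sigma> :: "'f ident set"
  assumes "plural ar"
    and "\<forall>e \<in> \<Sigma>. wf_ident ar e"
  shows "(\<forall>(A :: 'a set) F. in_VoS ar \<Sigma> A F \<longrightarrow> in_Vp ar \<Sigma> A F)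
       \<and> (\<forall>\<Gamma>. (\<forall>e \<in> \<Gamma>. wf_ident ar e) \<longrightarrow>
             (\<forall>(B :: ('f, nat) trm set) G. in_VoS ar \<Sigma> B G \<longrightarrow> Mod ar \<Gamma> B G) \<longrightarrow>
             (\<forall>(A :: 'a set) F. in_Vp ar \<Sigma> A F \<longrightarrow> Mod ar \<Gamma> A F))"
proof (intro conjI allI impI)
  fix A :: "'a set" and F
  assume "in_VoS ar \<Sigma> A F"
  then show "in_Vp ar \<Sigma> A F" using in_VoS_imp_in_Vp assms by blast
next
  fix \<Gamma> :: "'f ident set" and A :: "'a set" and F
  assume wf_\<Gamma>: "\<forall>e \<in> \<Gamma>. wf_ident ar e"
    and VoS_Mod: "\<forall>(B :: ('f, nat) trm set) G. in_VoS ar \<Sigma> B G \<longrightarrow> Mod ar \<Gamma> B G"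
    and Vp: "in_Vp ar \<Sigma> A F"
  have "satisfies A F e" if "e \<in> \<Gamma>" for e
    using in_Vp_satisfies_VoS_identity[OF assms _ _ Vp] VoS_Mod wf_\<Gamma> that
    unfolding Mod_def by blast
  moreover have "is_alg ar A F" using Vp unfolding in_Vp_def Mod_def by blast
  ultimately show "Mod ar \<Gamma> A F" unfolding Mod_def by blast
qed

end
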